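(* Consider the single-path uplink system and problem in the context (antenna-moving-region constraints omitted), and assume $K(K-1)/2\le I_M+I_N$. Let $\mathcal{P}_1,\mathcal{P}_2$ be any partition of $\mathcal{P}=\{(k,q):1\le k<q\le K\}$ with $|\mathcal{P}_1|\le I_M$ and $|\mathcal{P}_2|\le I_N$, with elements enumerated as $\mathcal{P}_1=\{(k_1^{(i)},q_1^{(i)})\}_{i=1}^{|\mathcal{P}_1|}$ and $\mathcal{P}_2=\{(k_2^{(i)},q_2^{(i)})\}_{i=1}^{|\mathcal{P}_2|}$. Define $\mathbf{d}_x\in\mathbb{R}^{I_M}$ and $\mathbf{d}_y\in\mathbb{R}^{I_N}$ recursively by $$[\mathbf{d}_x]_i=\begin{cases}\dfrac{(\rho_i+1/m_i)\lambda}{|\vartheta_{k_1^{(i)}}-\vartheta_{q_1^{(i)}}|}, & 1\le i\le|\mathcal{P}_1|,\\[2mm] \sum_{j=1}^{i-1}(m_j-1)[\mathbf{d}_x]_j+d_{\min,x}, & |\mathcal{P}_1|+1\le i\le I_M,\end{cases}$$ $$[\mathbf{d}_y]_i=\begin{cases}\dfrac{(\tau_i+1/n_i)\lambda}{|\varphi_{k_2^{(i)}}-\varphi_{q_2^{(i)}}|}, & 1\le i\le|\mathcal{P}_2|,\\[2mm] \sum_{j=1}^{i-1}(n_j-1)[\mathbf{d}_y]_j+d_{\min,y}, & |\mathcal{P}_2|+1\le i\le I_N,\end{cases}$$ where $\rho_i$ is the smallest nonnegative integer such that $[\mathbf{d}_x]_i\ge\sum_{j=1}^{i-1}(m_j-1)[\mathbf{d}_x]_j+d_{\min,x}$,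 and $\tau_i$ is the smallest nonnegative integer such that $[\mathbf{d}_y]_i\ge\sum_{j=1}^{i-1}(n_j-1)[\mathbf{d}_y]_j+d_{\min,y}$. Then $\mathbf{x}^\star=\mathbf{U}^{\mathrm T}\mathbf{d}_x$ and $\mathbf{y}^\star=\mathbf{V}^{\mathrm T}\mathbf{d}_y$ are optimal APVs for the problem: there exist $\mathbf{W}$ and $\mathbf{p}$ such that $(\mathbf{x}^\star,\mathbf{y}^\star,\mathbf{W},\mathbf{p})$ is an optimal solution, attaining total transmit power $\sum_{k=1}^K\frac{\sigma^2(2^{r_k}-1)}{MN|b_k|^2}$.
   Context: A base station has a cross-linked movable antenna array with $M$ columns and $N$ rows; horizontal APV $\mathbf{x}=[x_1,\dots,x_M]^{\mathrm T}\in\mathbb{R}^M$, vertical APV $\mathbf{y}=[y_1,\dots,y_N]^{\mathrm T}\in\mathbb{R}^N$, antenna $(m,n)$ at $(x_m,y_n)$. $K$ single-antenna users; user $k$ has a single path with coefficient $b_k\ne0$ and virtual angles $\vartheta_k,\varphi_k\in[-1,1]$, with $\vartheta_k\ne\vartheta_q$ and $\varphi_k\ne\varphi_q$ for $k\ne q$. With wavelength $\lambda>0$, $\mathbf{h}_k(\mathbf{x},\mathbf{y})=b_k\,\mathbf{a}^{\mathrm{hor}}_k(\mathbf{x})\otimes\mathbf{a}^{\mathrm{ver}}_k(\mathbf{y})$, $\mathbf{a}^{\mathrm{hor}}_k(\mathbf{x})=[e^{-\mathrm{j}\frac{2\pi}{\lambda}x_m\vartheta_k}]_{m=1}^M$,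 $\mathbf{a}^{\mathrm{ver}}_k(\mathbf{y})=[e^{-\mathrm{j}\frac{2\pi}{\lambda}y_n\varphi_k}]_{n=1}^N$. With combining matrix $\mathbf{W}=[\mathbf{w}_1,\dots,\mathbf{w}_K]\in\mathbb{C}^{MN\times K}$, powers $p_k$, noise power $\sigma^2>0$, SINR $\gamma_k=\frac{|\mathbf{w}_k^{\mathrm H}\mathbf{h}_k|^2p_k}{\sum_{q\ne k}|\mathbf{w}_k^{\mathrm H}\mathbf{h}_q|^2p_q+\|\mathbf{w}_k\|_2^2\sigma^2}$. The problem: minimize $\sum_k p_k$ over $\mathbf{x},\mathbf{y},\mathbf{W},\mathbf{p}$ subject to $\log_2(1+\gamma_k)\ge r_k$, $p_k\ge0$ (given $r_k\ge0$), $x_{m+1}-x_m\ge d_{\min,x}$ ($1\le m\le M-1$), $y_{n+1}-y_n\ge d_{\min,y}$ ($1\le n\le N-1$), given $d_{\min,x},d_{\min,y}>0$ (no bounds on the moving region). Factorization notation: write $M=\prod_{i=1}^{I_M}m_i$ with primes $m_1\le\dots\le m_{I_M}$ ($I_M$ = number of prime factors with multiplicity); set $M_1=1$, $M_i=\prod_{j=1}^{i-1}m_j$ ($2\le i\le I_M$), $\mathbf{m}=[M_1,\dots,M_{I_M}]^{\mathrm T}$. Each integer $1\le m\le M$ is written uniquely as $m=\mathbf{u}_m^{\mathrm T}\mathbf{m}+1$ with $\mathbf{u}_m\in\mathbb{Z}^{I_M}$, $0\le[\mathbf{u}_m]_i<m_i$ (mixed-radix digits of $m-1$); $\mathbf{U}=[\mathbf{u}_1,\dots,\mathbf{u}_M]\in\mathbb{Z}^{I_M\times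 M}$. Analogously $N=\prod_{i=1}^{I_N}n_i$ with primes $n_1\le\dots\le n_{I_N}$, $N_1=1$, $N_i=\prod_{j=1}^{i-1}n_j$, $\mathbf{n}=[N_1,\dots,N_{I_N}]^{\mathrm T}$, $n=\mathbf{v}_n^{\mathrm T}\mathbf{n}+1$ with $0\le[\mathbf{v}_n]_i<n_i$, $\mathbf{V}=[\mathbf{v}_1,\dots,\mathbf{v}_N]\in\mathbb{Z}^{I_N\times N}$. *)

theory Defs
  imports Complex_Main "HOL-Computational_Algebra.Primes" "HOL-Library.Multiset"
begin

(* Conventions: antennas, users and factor positions are 0-indexed.
   Antenna column m (0 \<le> m < M) corresponds to the paper's m+1;
   user k (0 \<le> k < K) to the paper's k+1; factor position i (0 \<le> i < I_M)
   to the paper's i+1. *)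

(* prime factors m_1 \<le> ... \<le> m_{I_M} of M, as a sorted list (length = I_M) *)
definition primes_sorted :: "nat \<Rightarrow> nat list" where
  "primes_sorted M = sorted_list_of_multiset (prime_factorization M)"

definition radix_base :: "nat list \<Rightarrow> nat \<Rightarrow> nat" where
  "radix_base ms i = (\<Prod>j<i. ms ! j)"

(* [u_{m+1}]_{i+1}: mixed-radix digit i of m (m = paper's m-1) *)
definition digit :: "nat list \<Rightarrow> nat \<Rightarrow> nat \<Rightarrow> nat" where
  "digit ms m i = (m div radix_base ms i) mod (ms ! i)"

(* recursive construction of the first i entries of d_x (resp. d_y).
   ms: prime factor list, delta j = |theta_k - theta_q| for the j-th pair of P_1,
   P = |P_1|, lam = wavelength, dmin = minimum spacing *)
fun dlist :: "nat list \<Rightarrow> (nat \<Rightarrow> real) \<Rightarrow> nat \<Rightarrow> real \<Rightarrow> real \<Rightarrow> nat \<Rightarrow> real list" where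
  "dlist ms delta P lam dmin 0 = []"
| "dlist ms delta P lam dmin (Suc i) =
     (let ds = dlist ms delta P lam dmin i;
          S = (\<Sum>j<i. real (ms ! j - 1) * ds ! j) + dmin
      in ds @ [if i < P
               then (real (LEAST rho::nat. (real rho + 1 / real (ms ! i)) * lam / delta i \<ge> S)
                       + 1 / real (ms ! i)) * lam / delta i
               else S])"

definition dvec :: "nat list \<Rightarrow> (nat \<Rightarrow> real) \<Rightarrow> nat \<Rightarrow> real \<Rightarrow> real \<Rightarrow> nat \<Rightarrow> real" where
  "dvec ms delta P lam dmin i = dlist ms delta P lam dmin (Suc i) ! i"

(* x* = U^T d_x : entry m is sum_i [u_m]_i [d_x]_i *)
definition apv :: "nat list \<Rightarrow> (nat \<Rightarrow> real) \<Rightarrow> nat \<Rightarrow> real" where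
  "apv ms d m = (\<Sum>i<length ms. real (digit ms m i) * d i)"

(* channel of a user: entry (m,n) of b * a_hor(x) \<otimes> a_ver(y) *)
definition chan :: "real \<Rightarrow> complex \<Rightarrow> real \<Rightarrow> real \<Rightarrow> (nat \<Rightarrow> real) \<Rightarrow> (nat \<Rightarrow> real)
                      \<Rightarrow> nat \<times> nat \<Rightarrow> complex" where
  "chan lam b th ph x y = (\<lambda>(m, n).
      b * exp (- \<i> * complex_of_real (2 * pi / lam * x m * th))
        * exp (- \<i> * complex_of_real (2 * pi / lam * y n * ph)))"

definition cinner :: "nat \<Rightarrow> nat \<Rightarrow> (nat \<times> nat \<Rightarrow> complex) \<Rightarrow> (nat \<times> nat \<Rightarrow> complex) \<Rightarrow> complex" where
  "cinner M N w h = (\<Sum>m<M. \<Sum>n<N. cnj (w (m, n)) * h (m, n))"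

definition cnormsq :: "nat \<Rightarrow> nat \<Rightarrow> (nat \<times> nat \<Rightarrow> complex) \<Rightarrow> real" where
  "cnormsq M N w = (\<Sum>m<M. \<Sum>n<N. (cmod (w (m, n)))\<^sup>2)"

definition sinr :: "nat \<Rightarrow> nat \<Rightarrow> nat \<Rightarrow> real \<Rightarrow> (nat \<Rightarrow> complex) \<Rightarrow> (nat \<Rightarrow> real)
     \<Rightarrow> (nat \<Rightarrow> real) \<Rightarrow> real \<Rightarrow> (nat \<Rightarrow> real) \<Rightarrow> (nat \<Rightarrow> real)
     \<Rightarrow> (nat \<Rightarrow> nat \<times> nat \<Rightarrow> complex) \<Rightarrow> (nat \<Rightarrow> real) \<Rightarrow> nat \<Rightarrow> real" where
  "sinr M N K lam b th ph sigma2 x y W p k =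
     (cmod (cinner M N (W k) (chan lam (b k) (th k) (ph k) x y)))\<^sup>2 * p k /
     ((\<Sum>q\<in>{..<K} - {k}. (cmod (cinner M N (W k) (chan lam (b q) (th q) (ph q) x y)))\<^sup>2 * p q)
      + cnormsq M N (W k) * sigma2)"

definition feasible :: "nat \<Rightarrow> nat \<Rightarrow> nat \<Rightarrow> real \<Rightarrow> (nat \<Rightarrow> complex) \<Rightarrow> (nat \<Rightarrow> real)
     \<Rightarrow> (nat \<Rightarrow> real) \<Rightarrow> real \<Rightarrow> (nat \<Rightarrow> real) \<Rightarrow> real \<Rightarrow> real
     \<Rightarrow> (nat \<Rightarrow> real) \<Rightarrow> (nat \<Rightarrow> real)
     \<Rightarrow> (nat \<Rightarrow> nat \<times> nat \<Rightarrow> complex) \<Rightarrow> (nat \<Rightarrow> real) \<Rightarrow> bool" where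
  "feasible M N K lam b th ph sigma2 r dminx dminy x y W p \<longleftrightarrow>
     (\<forall>k<K. p k \<ge> 0 \<and> log 2 (1 + sinr M N K lam b th ph sigma2 x y W p k) \<ge> r k)
     \<and> (\<forall>m. Suc m < M \<longrightarrow> x (Suc m) - x m \<ge> dminx)
     \<and> (\<forall>n. Suc n < N \<longrightarrow> y (Suc n) - y n \<ge> dminy)"

end

theory Submission
  imports Defs "HOL-Analysis.Convex"
begin

(* With the matched filter w_k = h_k and pairwise orthogonal channels, user k sees no
   interference and its SINR is p_k M N |b_k|^2 / sigma^2; by Cauchy-Schwarz no combiner
   and no antenna placement can do better, so the stated powers are optimal.

   Orthogonality: the inner product of two channels factors into a horizontal and a
   vertical array factor, sum_m exp(j 2 pi/lambda Delta x_m). For x = U^T d the mixed-radix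
   digits of m range independently, so this array factor is the product over the prime
   factors m_i of the geometric sums sum_{u < m_i} exp(j 2 pi/lambda Delta u [d]_i). If the
   pair with angle difference Delta sits at position i, then
   [d]_i = (rho_i + 1/m_i) lambda / |Delta| turns that factor into the sum of all m_i-th roots
   of unity, which vanishes.

   Spacing: [d]_i exceeds the largest displacement sum_{j<i} (m_j - 1) [d]_j of the lower
   digits by d_min, so x_{m+1} - x_m >= d_min even when the step m -> m+1 carries. *)

section \<open>Mixed-radix antenna positions\<close>

lemma radix_base_Cons_Suc: "radix_base (m0 # ms) (Suc i) = m0 * radix_base ms i"
  unfolding radix_base_def prod.lessThan_Suc_shift by simp

lemma digit_Cons_0: "digit (m0 # ms) m 0 = m mod m0"
  by (simp add: digit_def radix_base_def)

lemma digit_Cons_Suc: "digit (m0 # ms) m (Suc i) = digit ms (m div m0) i"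
  by (simp add: digit_def radix_base_Cons_Suc div_mult2_eq)

lemma apv_Cons: "apv (m0 # ms) d m = real (m mod m0) * d 0 + apv ms (\<lambda>i. d (Suc i)) (m div m0)"
  unfolding apv_def length_Cons sum.lessThan_Suc_shift by (simp add: digit_Cons_0 digit_Cons_Suc)

lemma prime_primes_sorted: "\<forall>p\<in>set (primes_sorted M). prime p"
  unfolding primes_sorted_def by auto

lemma prod_list_primes_sorted: "M > 0 \<Longrightarrow> prod_list (primes_sorted M) = M"
  unfolding primes_sorted_def
  by (metis prod_mset_prod_list mset_sorted_list_of_multiset prod_mset_prime_factorization_nat)

definition superincreasing :: "nat list \<Rightarrow> (nat \<Rightarrow> real) \<Rightarrow> real \<Rightarrow> bool" where
  "superincreasing ms d \<delta> \<longleftrightarrow> (\<forall>t<length ms. (\<Sum>j<t. real (ms ! j - 1) * d j) + \<delta> \<le> d t)"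

lemma superincreasing_Cons:
  "superincreasing (m0 # ms) d \<delta> \<longleftrightarrow>
     \<delta> \<le> d 0 \<and> superincreasing ms (\<lambda>i. d (Suc i)) (real (m0 - 1) * d 0 + \<delta>)"
  unfolding superincreasing_def length_Cons All_less_Suc2 sum.lessThan_Suc_shift by (simp add: add_ac)

lemma apv_Suc_diff_ge:
  assumes "superincreasing ms d \<delta>" and "Suc m < prod_list ms"
  shows "\<delta> \<le> apv ms d (Suc m) - apv ms d m"
  using assms
proof (induction ms arbitrary: d \<delta> m)
  case Nil
  then show ?case by simp
next
  case (Cons m0 ms)
  let ?d' = "\<lambda>i. d (Suc i)" and ?w = "m div m0"
  have sup: "\<delta> \<le> d 0" "superincreasing ms ?d' (real (m0 - 1) * d 0 + \<delta>)"
    using Cons.prems(1) by (simp_all add: superincreasing_Cons)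
  show ?case
  proof (cases "Suc (m mod m0) = m0")
    case False
    then show ?thesis using sup by (simp add: apv_Cons mod_Suc div_Suc algebra_simps)
  next
    case carry: True
    have carry_eq: "Suc m = m0 * Suc ?w"
      unfolding mult_Suc_right using carry mult_div_mod_eq[of m0 m] by linarith
    have "Suc ?w < prod_list ms"
      using Cons.prems(2) unfolding prod_list.Cons carry_eq mult_less_cancel1 by simp
    then have "real (m0 - 1) * d 0 + \<delta> \<le> apv ms ?d' (Suc ?w) - apv ms ?d' ?w"
      using Cons.IH[OF sup(2)] by blast
    moreover have "m mod m0 = m0 - 1"
      using carry by simp
    with carry have "apv (m0 # ms) d (Suc m) - apv (m0 # ms) d m =
        apv ms ?d' (Suc ?w) - apv ms ?d' ?w - real (m0 - 1) * d 0"
      by (simp add: apv_Cons mod_Suc div_Suc)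
    ultimately show ?thesis by linarith
  qed
qed

section \<open>Array factors\<close>

lemma sum_lessThan_mult:
  fixes g :: "nat \<Rightarrow> 'a::comm_monoid_add"
  shows "(\<Sum>m<a * b. g m) = (\<Sum>w<b. \<Sum>u<a. g (u + a * w))"
proof -
  have "(\<Sum>m<a * b. g m) = (\<Sum>w<b. sum g {w * a..<w * a + a})"
    using sum.nat_group[of g a b] by (simp add: mult.commute)
  also have "\<dots> = (\<Sum>w<b. \<Sum>u<a. g (u + a * w))"
    using sum.shift_bounds_nat_ivl[of g 0 "a * _" a]
    by (simp add: atLeast0LessThan mult.commute add.commute)
  finally show ?thesis .
qed

lemma sum_cis_apv:
  "(\<Sum>m<prod_list ms. cis (c * apv ms d m)) = (\<Prod>i<length ms. \<Sum>u<ms ! i. cis (c * real u * d i))"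
proof (induction ms arbitrary: d)
  case Nil
  show ?case by (simp add: apv_def)
next
  case (Cons m0 ms)
  have cis_apv_Cons: "cis (c * apv (m0 # ms) d (u + m0 * w)) =
      cis (c * real u * d 0) * cis (c * apv ms (\<lambda>i. d (Suc i)) w)" if "u < m0" for u w
    using that by (simp add: apv_Cons cis_mult distrib_left mult.assoc)
  have "(\<Sum>m<prod_list (m0 # ms). cis (c * apv (m0 # ms) d m)) =
      (\<Sum>w<prod_list ms. \<Sum>u<m0. cis (c * real u * d 0) * cis (c * apv ms (\<lambda>i. d (Suc i)) w))"
    by (simp add: sum_lessThan_mult cis_apv_Cons)
  also have "\<dots> = (\<Sum>u<m0. cis (c * real u * d 0)) * (\<Sum>w<prod_list ms. cis (c * apv ms (\<lambda>i. d (Suc i)) w))"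
    by (simp add: sum_distrib_left sum_distrib_right mult.commute)
  also have "\<dots> = (\<Prod>i<length (m0 # ms). \<Sum>u<(m0 # ms) ! i. cis (c * real u * d i))"
    unfolding length_Cons prod.lessThan_Suc_shift by (simp add: Cons.IH)
  finally show ?case .
qed

lemma sum_cis_roots_of_unity_eq_0:
  assumes "\<not> int m dvd s"
  shows "(\<Sum>u<m. cis (2 * pi * real u * of_int s / real m)) = 0"
proof (cases "m = 0")
  case False
  define \<omega> where "\<omega> = cis (2 * pi * of_int s / real m)"
  have powers: "cis (2 * pi * real u * of_int s / real m) = \<omega> ^ u" for u
    by (simp add: \<omega>_def DeMoivre mult_ac)
  have "\<omega> ^ m = cis (2 * pi * of_int s)"
    using False by (simp add: \<omega>_def DeMoivre)
  also have "\<dots> = 1" by simp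
  finally have root: "\<omega> ^ m = 1" .
  have "\<omega> \<noteq> 1"
  proof
    assume "\<omega> = 1"
    then have "cos (2 * pi * of_int s / real m) = 1"
      by (simp add: \<omega>_def complex_eq_iff)
    then obtain n :: int where "2 * pi * of_int s / real m = of_int n * 2 * pi"
      by (auto simp: cos_one_2pi_int)
    then have "of_int s = (of_int (int m * n) :: real)"
      using False by (simp add: field_simps)
    then have "s = int m * n" by (simp only: of_int_eq_iff)
    with assms show False by simp
  qed
  then show ?thesis
    by (simp add: powers geometric_sum root)
qed simp

lemma sum_cis_apv_eq_0:
  assumes primes: "\<forall>p\<in>set ms. prime p" and t: "t < length ms"
    and phase: "\<bar>c * d t\<bar> = 2 * pi * (real \<rho> + 1 / real (ms ! t))"
  shows "(\<Sum>m<prod_list ms. cis (c * apv ms d m)) = 0"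
proof -
  let ?p = "ms ! t"
  have "?p \<ge> 2" using primes t prime_ge_2_nat nth_mem by blast
  define n where "n = ?p * \<rho> + 1"
  define s :: int where "s = (if c * d t \<ge> 0 then 1 else -1) * int n"
  have phase_eq: "c * d t = 2 * pi * of_int s / real ?p"
    using phase \<open>?p \<ge> 2\<close> by (auto simp: s_def n_def abs_if field_simps split: if_splits)
  have "\<not> int ?p dvd s"
  proof
    assume "int ?p dvd s"
    then have "?p dvd n" by (simp add: s_def split: if_splits)
    then have "?p dvd 1" unfolding n_def using dvd_add_right_iff dvd_triv_left by blast
    with \<open>?p \<ge> 2\<close> show False by simp
  qed
  have "c * real u * d t = 2 * pi * real u * of_int s / real ?p" for u
  proof -
    have "c * real u * d t = real u * (c * d t)" by (simp only: mult_ac)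
    then show ?thesis unfolding phase_eq by simp
  qed
  then have "(\<Sum>u<?p. cis (c * real u * d t)) = 0"
    using sum_cis_roots_of_unity_eq_0[OF \<open>\<not> int ?p dvd s\<close>] by simp
  then show ?thesis
    unfolding sum_cis_apv using t by (intro prod_zero) auto
qed

section \<open>The recursive construction of d\<close>

lemma dlist_length: "length (dlist ms delta P lam dmin i) = i"
  by (induction i) (simp_all add: Let_def)

lemma dlist_nth: "j < i \<Longrightarrow> dlist ms delta P lam dmin i ! j = dvec ms delta P lam dmin j"
proof (induction i)
  case (Suc i)
  show ?case
  proof (cases "j < i")
    case True
    then show ?thesis using Suc by (simp add: Let_def nth_append dlist_length)
  next
    case False
    with Suc.prems have "j = i" by simp
    then show ?thesis by (simp add: dvec_def)
  qed
qed simp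

lemma dvec_unfold:
  "dvec ms delta P lam dmin t =
   (let S = (\<Sum>j<t. real (ms ! j - 1) * dvec ms delta P lam dmin j) + dmin in
    if t < P
    then (real (LEAST \<rho>::nat. (real \<rho> + 1 / real (ms ! t)) * lam / delta t \<ge> S)
            + 1 / real (ms ! t)) * lam / delta t
    else S)"
proof -
  have "(\<Sum>j<t. real (ms ! j - 1) * dlist ms delta P lam dmin t ! j) =
      (\<Sum>j<t. real (ms ! j - 1) * dvec ms delta P lam dmin j)"
    by (intro sum.cong refl) (simp add: dlist_nth)
  then show ?thesis
    by (simp add: dvec_def Let_def nth_append dlist_length)
qed

lemma superincreasing_dvec:
  assumes delta: "\<forall>t<P. delta t > 0" and lam: "lam > 0"
  shows "superincreasing ms (dvec ms delta P lam dmin) dmin"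
  unfolding superincreasing_def
proof (intro allI impI)
  fix t
  define S where "S = (\<Sum>j<t. real (ms ! j - 1) * dvec ms delta P lam dmin j) + dmin"
  have "S \<le> dvec ms delta P lam dmin t"
  proof (cases "t < P")
    case True
    obtain n :: nat where n: "S * delta t / lam < real n"
      using reals_Archimedean2 by blast
    have "S \<le> (real n + 1 / real (ms ! t)) * lam / delta t"
      using n delta lam True by (simp add: field_simps add_increasing2)
    then have "S \<le> (real (LEAST \<rho>::nat. (real \<rho> + 1 / real (ms ! t)) * lam / delta t \<ge> S)
                  + 1 / real (ms ! t)) * lam / delta t"
      by (rule LeastI)
    with True show ?thesis by (simp add: dvec_unfold[of ms delta P lam dmin t] Let_def S_def)
  qed (simp add: dvec_unfold[of ms delta P lam dmin t] Let_def S_def)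
  then show "S \<le> dvec ms delta P lam dmin t" .
qed

lemma dvec_phase:
  assumes "t < P" and "delta t = \<bar>\<Delta>\<bar>" and "\<Delta> \<noteq> 0" and "lam > 0"
  shows "\<exists>\<rho>::nat. \<bar>2 * pi / lam * \<Delta> * dvec ms delta P lam dmin t\<bar> = 2 * pi * (real \<rho> + 1 / real (ms ! t))"
  using assms by (auto simp: dvec_unfold[of ms delta P lam dmin t] Let_def abs_mult)

lemma array_factor_pair_eq_0:
  fixes th :: "nat \<Rightarrow> real" and ps :: "(nat \<times> nat) list"
  assumes primes: "\<forall>p\<in>set ms. prime p" and len: "length ps \<le> length ms"
    and pair: "(k, q) \<in> set ps \<or> (q, k) \<in> set ps" and "th k \<noteq> th q" and "lam > 0"
  shows "(\<Sum>m<prod_list ms. cis (2 * pi / lam * (th k - th q) *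
           apv ms (dvec ms (\<lambda>i. \<bar>th (fst (ps ! i)) - th (snd (ps ! i))\<bar>) (length ps) lam dmin) m)) = 0"
proof -
  define d where "d = dvec ms (\<lambda>i. \<bar>th (fst (ps ! i)) - th (snd (ps ! i))\<bar>) (length ps) lam dmin"
  from pair obtain i where i: "i < length ps" "ps ! i = (k, q) \<or> ps ! i = (q, k)"
    by (auto simp: in_set_conv_nth)
  then have "\<bar>th (fst (ps ! i)) - th (snd (ps ! i))\<bar> = \<bar>th k - th q\<bar>"
    by (auto simp: abs_minus_commute)
  then obtain \<rho> where phase: "\<bar>2 * pi / lam * (th k - th q) * d i\<bar> = 2 * pi * (real \<rho> + 1 / real (ms ! i))"
    unfolding d_def using dvec_phase[OF i(1)] \<open>th k \<noteq> th q\<close> \<open>lam > 0\<close> by fastforce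
  show ?thesis
    unfolding d_def[symmetric] by (rule sum_cis_apv_eq_0[of ms i _ d, OF primes _ phase]) (use i(1) len in simp)
qed

lemma apv_dvec_pairs_spacing:
  fixes th :: "nat \<Rightarrow> real" and ps :: "(nat \<times> nat) list"
  assumes "\<forall>(k, q)\<in>set ps. th k \<noteq> th q" and "lam > 0" and "Suc m < prod_list ms"
  shows "dmin \<le> apv ms (dvec ms (\<lambda>i. \<bar>th (fst (ps ! i)) - th (snd (ps ! i))\<bar>) (length ps) lam dmin) (Suc m)
              - apv ms (dvec ms (\<lambda>i. \<bar>th (fst (ps ! i)) - th (snd (ps ! i))\<bar>) (length ps) lam dmin) m"
proof -
  have "\<forall>t<length ps. \<bar>th (fst (ps ! t)) - th (snd (ps ! t))\<bar> > 0"
    using assms(1) nth_mem by fastforce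
  then show ?thesis
    by (rule apv_Suc_diff_ge[OF superincreasing_dvec[OF _ assms(2)] assms(3)])
qed

section \<open>Channels, SINR and optimal power\<close>

lemma chan_eq_cis:
  "chan lam b th ph x y (m, n) = b * cis (- (2 * pi / lam * x m * th)) * cis (- (2 * pi / lam * y n * ph))"
  unfolding chan_def cis_conv_exp by simp

lemma cinner_chan:
  "cinner M N (chan lam bk thk phk x y) (chan lam bq thq phq x y) =
   cnj bk * bq * (\<Sum>m<M. cis (2 * pi / lam * (thk - thq) * x m))
              * (\<Sum>n<N. cis (2 * pi / lam * (phk - phq) * y n))"
proof -
  have phase_diff: "cis (2 * pi / lam * (a - a') * z) = cis (2 * pi / lam * z * a) * cis (- (2 * pi / lam * z * a'))"
    for a a' z :: real
    by (simp add: cis_mult algebra_simps diff_divide_distrib)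
  have "cnj (chan lam bk thk phk x y (m, n)) * chan lam bq thq phq x y (m, n) =
      cnj bk * bq * (cis (2 * pi / lam * (thk - thq) * x m) * cis (2 * pi / lam * (phk - phq) * y n))"
    for m n
    unfolding chan_eq_cis phase_diff by (simp add: cis_cnj mult_ac)
  then show ?thesis
    by (simp add: cinner_def sum_distrib_left sum_distrib_right mult_ac)
qed

lemma cnormsq_chan: "cnormsq M N (chan lam b th ph x y) = real M * real N * (cmod b)\<^sup>2"
  by (simp add: cnormsq_def chan_eq_cis norm_mult)

lemma cinner_chan_self: "cinner M N (chan lam b th ph x y) (chan lam b th ph x y) = of_real (real M * real N * (cmod b)\<^sup>2)"
  by (simp add: cinner_chan mult.commute flip: complex_norm_square)

lemma cinner_cauchy_schwarz: "(cmod (cinner M N w h))\<^sup>2 \<le> cnormsq M N w * cnormsq M N h"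
proof -
  let ?I = "{..<M} \<times> {..<N}"
  have "cmod (cinner M N w h) \<le> (\<Sum>(m, n)\<in>?I. cmod (w (m, n)) * cmod (h (m, n)))"
    unfolding cinner_def sum.cartesian_product[symmetric]
    by (rule order_trans[OF norm_sum sum_mono], rule order_trans[OF norm_sum sum_mono]) (simp add: norm_mult)
  then have "(cmod (cinner M N w h))\<^sup>2 \<le> (\<Sum>i\<in>?I. cmod (w i) * cmod (h i))\<^sup>2"
    by (simp add: case_prod_beta' power_mono)
  also have "\<dots> \<le> (\<Sum>i\<in>?I. (cmod (w i))\<^sup>2) * (\<Sum>i\<in>?I. (cmod (h i))\<^sup>2)"
    by (rule Cauchy_Schwarz_ineq_sum)
  also have "\<dots> = cnormsq M N w * cnormsq M N h"
    by (simp add: cnormsq_def sum.cartesian_product case_prod_beta')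
  finally show ?thesis .
qed

lemma sinr_nonneg:
  assumes "\<forall>q<K. 0 \<le> p q" and "k < K" and "sigma2 \<ge> 0"
  shows "0 \<le> sinr M N K lam b th ph sigma2 x y W p k"
  using assms unfolding sinr_def cnormsq_def
  by (intro divide_nonneg_nonneg add_nonneg_nonneg sum_nonneg mult_nonneg_nonneg) auto

lemma sinr_le_snr:
  assumes p: "\<forall>q<K. 0 \<le> p q" and k: "k < K" and sigma2: "sigma2 > 0"
  shows "sinr M N K lam b th ph sigma2 x y W p k \<le> p k * (real M * real N * (cmod (b k))\<^sup>2) / sigma2"
proof -
  define Q where "Q = real M * real N * (cmod (b k))\<^sup>2"
  define A where "A = (cmod (cinner M N (W k) (chan lam (b k) (th k) (ph k) x y)))\<^sup>2"
  define C where "C = cnormsq M N (W k)"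
  define I where "I = (\<Sum>q\<in>{..<K} - {k}. (cmod (cinner M N (W k) (chan lam (b q) (th q) (ph q) x y)))\<^sup>2 * p q)"
  have "A \<le> C * Q"
    unfolding A_def C_def Q_def using cinner_cauchy_schwarz by (metis cnormsq_chan)
  have "0 \<le> I" unfolding I_def using p by (intro sum_nonneg) auto
  have "0 \<le> C" unfolding C_def cnormsq_def by (intro sum_nonneg) auto
  have "0 \<le> p k" using p k by simp
  have "A * p k / (I + C * sigma2) \<le> Q * p k / sigma2"
  proof (cases "C = 0")
    case True
    then show ?thesis using \<open>A \<le> C * Q\<close> \<open>0 \<le> p k\<close> sigma2 by (simp add: A_def Q_def)
  next
    case False
    then have "A * p k / (I + C * sigma2) \<le> A * p k / (C * sigma2)"
      using \<open>0 \<le> I\<close> \<open>0 \<le> C\<close> \<open>0 \<le> p k\<close> sigma2 by (intro frac_le) (auto simp: A_def)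
    also have "\<dots> \<le> C * Q * p k / (C * sigma2)"
      using \<open>A \<le> C * Q\<close> \<open>0 \<le> C\<close> \<open>0 \<le> p k\<close> sigma2 by (intro divide_right_mono mult_right_mono) auto
    also have "\<dots> = Q * p k / sigma2" using False by simp
    finally show ?thesis .
  qed
  then show ?thesis unfolding sinr_def A_def C_def I_def Q_def by (simp add: mult.commute)
qed

lemma sinr_matched_filter:
  assumes "\<forall>q<K. q \<noteq> k \<longrightarrow> cinner M N (chan lam (b k) (th k) (ph k) x y) (chan lam (b q) (th q) (ph q) x y) = 0"
  shows "sinr M N K lam b th ph sigma2 x y (\<lambda>k. chan lam (b k) (th k) (ph k) x y) p k =
         p k * (real M * real N * (cmod (b k))\<^sup>2) / sigma2"
proof -
  define Q where "Q = real M * real N * (cmod (b k))\<^sup>2"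
  have "(\<Sum>q\<in>{..<K} - {k}. (cmod (cinner M N (chan lam (b k) (th k) (ph k) x y) (chan lam (b q) (th q) (ph q) x y)))\<^sup>2 * p q) = 0"
    using assms by (intro sum.neutral) auto
  moreover have "cmod (cinner M N (chan lam (b k) (th k) (ph k) x y) (chan lam (b k) (th k) (ph k) x y)) = Q"
    unfolding cinner_chan_self norm_of_real Q_def by simp
  ultimately have "sinr M N K lam b th ph sigma2 x y (\<lambda>k. chan lam (b k) (th k) (ph k) x y) p k = Q\<^sup>2 * p k / (Q * sigma2)"
    unfolding sinr_def cnormsq_chan Q_def by simp
  also have "\<dots> = p k * Q / sigma2"
    by (cases "Q = 0") (simp_all add: power2_eq_square)
  finally show ?thesis unfolding Q_def .
qed

lemma feasible_power_ge:
  assumes feasible: "feasible M N K lam b th ph sigma2 r dminx dminy x y W p" and k: "k < K"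
    and sigma2: "sigma2 > 0"
  shows "sigma2 * (2 powr r k - 1) / (real M * real N * (cmod (b k))\<^sup>2) \<le> p k"
proof (cases "real M * real N * (cmod (b k))\<^sup>2 = 0")
  case False
  define \<gamma> where "\<gamma> = sinr M N K lam b th ph sigma2 x y W p k"
  have p: "\<forall>q<K. 0 \<le> p q" and rate: "r k \<le> log 2 (1 + \<gamma>)"
    using feasible k unfolding feasible_def \<gamma>_def by auto
  have "0 \<le> \<gamma>" unfolding \<gamma>_def using sinr_nonneg[OF p k] sigma2 by simp
  have "2 powr r k \<le> 2 powr log 2 (1 + \<gamma>)"
    using rate by (intro powr_mono) auto
  also have "\<dots> = 1 + \<gamma>"
    using \<open>0 \<le> \<gamma>\<close> by simp
  finally have "2 powr r k - 1 \<le> \<gamma>" by simp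
  also have "\<dots> \<le> p k * (real M * real N * (cmod (b k))\<^sup>2) / sigma2"
    unfolding \<gamma>_def using sinr_le_snr[OF p k sigma2] .
  finally show ?thesis
    using False sigma2 by (simp add: field_simps)
next
  case True
  then show ?thesis using feasible k unfolding True feasible_def by simp
qed

lemma orthogonal_channels_optimal:
  assumes "M \<ge> 1" and "N \<ge> 1" and sigma2: "sigma2 > 0" and b: "\<forall>k<K. b k \<noteq> 0"
    and r: "\<forall>k<K. r k \<ge> 0"
    and orth: "\<forall>k<K. \<forall>q<K. k \<noteq> q \<longrightarrow>
       cinner M N (chan lam (b k) (th k) (ph k) x y) (chan lam (b q) (th q) (ph q) x y) = 0"
    and spacing: "\<forall>m. Suc m < M \<longrightarrow> x (Suc m) - x m \<ge> dminx" "\<forall>n. Suc n < N \<longrightarrow> y (Suc n) - y n \<ge> dminy"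
  shows "\<exists>W p. feasible M N K lam b th ph sigma2 r dminx dminy x y W p
        \<and> (\<forall>x' y' W' p'. feasible M N K lam b th ph sigma2 r dminx dminy x' y' W' p'
               \<longrightarrow> (\<Sum>k<K. p k) \<le> (\<Sum>k<K. p' k))
        \<and> (\<Sum>k<K. p k) = (\<Sum>k<K. sigma2 * (2 powr r k - 1) / (real M * real N * (cmod (b k))\<^sup>2))"
proof -
  define W where "W k = chan lam (b k) (th k) (ph k) x y" for k
  define Q where "Q k = real M * real N * (cmod (b k))\<^sup>2" for k
  define p where "p k = sigma2 * (2 powr r k - 1) / Q k" for k
  have Q_pos: "Q k > 0" if "k < K" for k
    using that \<open>M \<ge> 1\<close> \<open>N \<ge> 1\<close> b unfolding Q_def by auto
  have "feasible M N K lam b th ph sigma2 r dminx dminy x y W p"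
    unfolding feasible_def
  proof (intro conjI allI impI)
    fix k assume "k < K"
    have "2 powr r k \<ge> 1"
      using \<open>k < K\<close> r by (intro ge_one_powr_ge_zero) auto
    then show "0 \<le> p k"
      unfolding p_def using Q_pos[OF \<open>k < K\<close>] sigma2 by simp
    have "sinr M N K lam b th ph sigma2 x y W p k = p k * Q k / sigma2"
      unfolding Q_def W_def by (rule sinr_matched_filter) (use orth \<open>k < K\<close> in auto)
    also have "\<dots> = 2 powr r k - 1"
      unfolding p_def using Q_pos[OF \<open>k < K\<close>] sigma2 by simp
    finally show "r k \<le> log 2 (1 + sinr M N K lam b th ph sigma2 x y W p k)"
      by simp
  qed (use spacing in auto)
  moreover have "(\<Sum>k<K. p k) \<le> (\<Sum>k<K. p' k)"
    if "feasible M N K lam b th ph sigma2 r dminx dminy x' y' W' p'" for x' y' W' p'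
    unfolding p_def Q_def using feasible_power_ge[OF that _ sigma2] by (intro sum_mono) auto
  ultimately show ?thesis
    unfolding p_def Q_def by blast
qed

lemma chan_orthogonal_of_pair:
  fixes th ph :: "nat \<Rightarrow> real" and ps1 ps2 :: "(nat \<times> nat) list"
  assumes "\<forall>p\<in>set ms1. prime p" and "\<forall>p\<in>set ms2. prime p"
    and "length ps1 \<le> length ms1" and "length ps2 \<le> length ms2" and "lam > 0"
    and "th k \<noteq> th q" and "ph k \<noteq> ph q"
    and pair: "(k, q) \<in> set ps1 \<union> set ps2 \<or> (q, k) \<in> set ps1 \<union> set ps2"
  shows "cinner (prod_list ms1) (prod_list ms2)
     (chan lam (b k) (th k) (ph k)
        (apv ms1 (dvec ms1 (\<lambda>i. \<bar>th (fst (ps1 ! i)) - th (snd (ps1 ! i))\<bar>) (length ps1) lam dminx))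
        (apv ms2 (dvec ms2 (\<lambda>i. \<bar>ph (fst (ps2 ! i)) - ph (snd (ps2 ! i))\<bar>) (length ps2) lam dminy)))
     (chan lam (b q) (th q) (ph q)
        (apv ms1 (dvec ms1 (\<lambda>i. \<bar>th (fst (ps1 ! i)) - th (snd (ps1 ! i))\<bar>) (length ps1) lam dminx))
        (apv ms2 (dvec ms2 (\<lambda>i. \<bar>ph (fst (ps2 ! i)) - ph (snd (ps2 ! i))\<bar>) (length ps2) lam dminy)))
   = 0"
proof -
  from pair consider "(k, q) \<in> set ps1 \<or> (q, k) \<in> set ps1" | "(k, q) \<in> set ps2 \<or> (q, k) \<in> set ps2"
    by blast
  then show ?thesis
    unfolding cinner_chan using array_factor_pair_eq_0 assms by cases simp_all
qed

theorem theorem3: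
  fixes M N K :: nat and lam sigma2 dminx dminy :: real
    and b :: "nat \<Rightarrow> complex" and th ph r :: "nat \<Rightarrow> real"
    and ps1 ps2 :: "(nat \<times> nat) list"
  assumes "M \<ge> 1" and "N \<ge> 1"
    and "lam > 0" and "sigma2 > 0" and "dminx > 0" and "dminy > 0"
    and "\<forall>k<K. b k \<noteq> 0"
    and "\<forall>k<K. -1 \<le> th k \<and> th k \<le> 1 \<and> -1 \<le> ph k \<and> ph k \<le> 1"
    and "\<forall>k<K. \<forall>q<K. k \<noteq> q \<longrightarrow> th k \<noteq> th q \<and> ph k \<noteq> ph q"
    and "\<forall>k<K. r k \<ge> 0"
    and "K * (K - 1) div 2 \<le> length (primes_sorted M) + length (primes_sorted N)"
    and "distinct ps1" and "distinct ps2" and "set ps1 \<inter> set ps2 = {}"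
    and "set ps1 \<union> set ps2 = {(k, q). k < q \<and> q < K}"
    and "length ps1 \<le> length (primes_sorted M)"
    and "length ps2 \<le> length (primes_sorted N)"
  shows "\<exists>W p.
     let xs = apv (primes_sorted M)
                (dvec (primes_sorted M) (\<lambda>i. \<bar>th (fst (ps1 ! i)) - th (snd (ps1 ! i))\<bar>)
                      (length ps1) lam dminx);
         ys = apv (primes_sorted N)
                (dvec (primes_sorted N) (\<lambda>i. \<bar>ph (fst (ps2 ! i)) - ph (snd (ps2 ! i))\<bar>)
                      (length ps2) lam dminy)
     in feasible M N K lam b th ph sigma2 r dminx dminy xs ys W p
        \<and> (\<forall>x y W' p'. feasible M N K lam b th ph sigma2 r dminx dminy x y W' p'
               \<longrightarrow> (\<Sum>k<K. p k) \<le> (\<Sum>k<K. p' k))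
        \<and> (\<Sum>k<K. p k) = (\<Sum>k<K. sigma2 * (2 powr r k - 1) / (real M * real N * (cmod (b k))\<^sup>2))"
proof -
  define xs where "xs = apv (primes_sorted M)
    (dvec (primes_sorted M) (\<lambda>i. \<bar>th (fst (ps1 ! i)) - th (snd (ps1 ! i))\<bar>) (length ps1) lam dminx)"
  define ys where "ys = apv (primes_sorted N)
    (dvec (primes_sorted N) (\<lambda>i. \<bar>ph (fst (ps2 ! i)) - ph (snd (ps2 ! i))\<bar>) (length ps2) lam dminy)"
  have M: "prod_list (primes_sorted M) = M" and N: "prod_list (primes_sorted N) = N"
    using assms(1,2) by (simp_all add: prod_list_primes_sorted)
  have orth: "\<forall>k<K. \<forall>q<K. k \<noteq> q \<longrightarrow>
      cinner M N (chan lam (b k) (th k) (ph k) xs ys) (chan lam (b q) (th q) (ph q) xs ys) = 0"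
  proof (intro allI impI)
    fix k q assume kq: "k < K" "q < K" "k \<noteq> q"
    then have "(k, q) \<in> set ps1 \<union> set ps2 \<or> (q, k) \<in> set ps1 \<union> set ps2"
      unfolding assms(15) by auto
    then show "cinner M N (chan lam (b k) (th k) (ph k) xs ys) (chan lam (b q) (th q) (ph q) xs ys) = 0"
      using chan_orthogonal_of_pair[OF prime_primes_sorted prime_primes_sorted assms(16,17,3)] assms(9) kq
      unfolding xs_def ys_def M N by blast
  qed
  have "set ps1 \<subseteq> {(k, q). k < q \<and> q < K}" "set ps2 \<subseteq> {(k, q). k < q \<and> q < K}"
    using assms(15) by auto
  then have "\<forall>(k, q)\<in>set ps1. th k \<noteq> th q" "\<forall>(k, q)\<in>set ps2. ph k \<noteq> ph q"
    using assms(9) by fastforce+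
  then have spacing: "\<forall>m. Suc m < M \<longrightarrow> dminx \<le> xs (Suc m) - xs m"
      "\<forall>n. Suc n < N \<longrightarrow> dminy \<le> ys (Suc n) - ys n"
    unfolding xs_def ys_def using apv_dvec_pairs_spacing assms(3) M N by auto
  show ?thesis
    unfolding Let_def xs_def[symmetric] ys_def[symmetric]
    using orthogonal_channels_optimal[OF assms(1,2,4,7,10) orth spacing] by blast
qed

end
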